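(* Let $p$ be a positive integer, $H$ a graph, $T$ a complete rooted ternary tree and $V\subseteq V(T(H))$ with $OC(T,V)\subsetneq V(T)$. Let $T_1,\dots,T_q$ be a minimal sequence of largest subtrees of $T$ with respect to $V$ lacking $p$. Let $T^*$ be the tree obtained from $T$ by deleting the vertices of $T_q$, and $V^*=V\cap V(T^*(H))$. Then $OC(T^*,V^* )\subsetneq V(T^* )$.
   Context: Complete rooted ternary tree: rooted tree, all root-leaf paths of equal length, every non-leaf vertex has exactly 3 children. Graph $T(H)$: for $V(H)=\{1,\dots,m\}$, vertices $v^i$ ($v\in V(T)$), each $\{v^1,\dots,v^m\}$ spanning a copy $H^v$ of $H$, plus edges $u^iv^i$ for $uv\in E(T)$; for a subtree $T'$, $T'(H)$ is the subgraph induced by the copies $H^v$, $v\in V(T')$. $OC(T,V)=\{u\in V(T): V(H^u)\cap V\neq\emptyset\}$. An immediate subtree of $T$ consists of a child of the root and all its descendants; it is largest w.r.t. $V$ if $|OC(T,V)\cap V(T')|$ is maximum among immediate subtrees. A sequence of largest subtrees: $T_1=T$, $V_1=V$, $T_{i+1}$ a largest immediate subtree of $T_i$ w.r.t. $V_i$, $V_{i+1}=V_i\cap V(T_{i+1}(H))$. It is minimal lacking $p$ if $|OC(T_1,V_1)|-|OC(T_q,V_q)|\geq p$ and $|OC(T_1,V_1)|-|OC(T_{q-1},V_{q-1})|<p$. *)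

theory Defs
  imports Main
begin

(* Canonical complete rooted ternary tree of depth d: nodes are words over {0,1,2}
   of length at most d; the root is [], the children of v are v@[0], v@[1], v@[2]. *)
definition tern_tree :: "nat \<Rightarrow> nat list set" where
  "tern_tree d = {v. set v \<subseteq> {0,1,2} \<and> length v \<le> d}"

definition subtree_at :: "nat \<Rightarrow> nat list \<Rightarrow> nat list set" where
  "subtree_at d w = {v \<in> tern_tree d. \<exists>u. v = w @ u}"

(* H is a graph with V(H) = {1..m}; vertex v^i of T(H) is the pair (v,i).
   Vertex set of T'(H) for a set S of tree vertices. *)
definition TH_verts :: "nat list set \<Rightarrow> nat \<Rightarrow> (nat list \<times> nat) set" where
  "TH_verts S m = S \<times> {1..m}"

definition TH_edge :: "nat list set \<Rightarrow> nat \<Rightarrow> (nat \<Rightarrow> nat \<Rightarrow> bool)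
    \<Rightarrow> (nat list \<times> nat) \<Rightarrow> (nat list \<times> nat) \<Rightarrow> bool" where
  "TH_edge S m EH x y \<longleftrightarrow> x \<in> TH_verts S m \<and> y \<in> TH_verts S m \<and>
     ((fst x = fst y \<and> EH (snd x) (snd y)) \<or>
      (snd x = snd y \<and> (\<exists>c\<in>{0,1,2::nat}. fst y = fst x @ [c] \<or> fst x = fst y @ [c])))"

definition OC :: "nat \<Rightarrow> nat list set \<Rightarrow> (nat list \<times> nat) set \<Rightarrow> nat list set" where
  "OC m S V = {u \<in> S. \<exists>i\<in>{1..m}. (u, i) \<in> V}"

(* T_i is the subtree rooted at w i, V_i = Vs i, for i = 1..q *)
definition largest_seq :: "nat \<Rightarrow> nat \<Rightarrow> (nat list \<times> nat) set \<Rightarrow> nat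
    \<Rightarrow> (nat \<Rightarrow> nat list) \<Rightarrow> (nat \<Rightarrow> (nat list \<times> nat) set) \<Rightarrow> bool" where
  "largest_seq d m V q w Vs \<longleftrightarrow> 1 \<le> q \<and> w 1 = [] \<and> Vs 1 = V \<and>
     (\<forall>i. 1 \<le> i \<and> i < q \<longrightarrow>
        length (w i) < d \<and>
        (\<exists>c\<in>{0,1,2}. w (Suc i) = w i @ [c]) \<and>
        (\<forall>c\<in>{0,1,2}. card (OC m (subtree_at d (w i)) (Vs i) \<inter> subtree_at d (w i @ [c]))
                      \<le> card (OC m (subtree_at d (w i)) (Vs i) \<inter> subtree_at d (w (Suc i)))) \<and>
        Vs (Suc i) = Vs i \<inter> TH_verts (subtree_at d (w (Suc i))) m)"

definition minimal_lacking :: "nat \<Rightarrow> nat \<Rightarrow> (nat list \<times> nat) set \<Rightarrow> nat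
    \<Rightarrow> (nat \<Rightarrow> nat list) \<Rightarrow> (nat \<Rightarrow> (nat list \<times> nat) set) \<Rightarrow> nat \<Rightarrow> bool" where
  "minimal_lacking d m V q w Vs p \<longleftrightarrow> largest_seq d m V q w Vs \<and>
     int (card (OC m (subtree_at d (w 1)) (Vs 1))) - int (card (OC m (subtree_at d (w q)) (Vs q))) \<ge> int p \<and>
     int (card (OC m (subtree_at d (w 1)) (Vs 1))) - int (card (OC m (subtree_at d (w (q - 1))) (Vs (q - 1)))) < int p"

end

theory Submission
  imports Defs
begin

text \<open>If the part \<open>T*\<close> outside the last subtree \<open>T\<^sub>q\<close> were fully occupied, then so would be
  a sibling of \<open>T\<^sub>q\<close> inside \<open>T\<^sub>q\<^sub>-\<^sub>1\<close>. Since \<open>T\<^sub>q\<close> was chosen largest among the children of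
  \<open>T\<^sub>q\<^sub>-\<^sub>1\<close> and all children have the same size, \<open>T\<^sub>q\<close> would then be fully occupied as well,
  so the whole tree would be occupied, contrary to the hypothesis.\<close>

lemma finite_tern_tree: "finite (tern_tree d)"
  unfolding tern_tree_def by (simp add: finite_lists_length_le)

lemma finite_subtree_at: "finite (subtree_at d w)"
  using finite_tern_tree unfolding subtree_at_def by auto

lemma subtree_at_subset_tern_tree: "subtree_at d w \<subseteq> tern_tree d"
  unfolding subtree_at_def by auto

lemma subtree_at_append_subset: "subtree_at d (w @ u) \<subseteq> subtree_at d w"
  unfolding subtree_at_def by auto

lemma subtree_at_siblings_disjoint:
  "c \<noteq> c' \<Longrightarrow> subtree_at d (w @ [c]) \<inter> subtree_at d (w @ [c']) = {}"
  unfolding subtree_at_def by auto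

lemma card_subtree_at_child_le:
  assumes "c' \<in> {0,1,2}"
  shows "card (subtree_at d (w @ [c])) \<le> card (subtree_at d (w @ [c']))"
proof (rule card_inj_on_le)
  let ?f = "\<lambda>v. (w @ [c']) @ drop (Suc (length w)) v"
  show "inj_on ?f (subtree_at d (w @ [c]))"
    unfolding subtree_at_def inj_on_def by auto
  show "?f ` subtree_at d (w @ [c]) \<subseteq> subtree_at d (w @ [c'])"
    using assms unfolding subtree_at_def tern_tree_def by auto
qed (rule finite_subtree_at)

lemma subtree_at_subset_if_sibling_subset:
  assumes "c' \<in> {0,1,2}"
    and "subtree_at d (w @ [c']) \<subseteq> A"
    and "card (A \<inter> subtree_at d (w @ [c'])) \<le> card (A \<inter> subtree_at d (w @ [c]))"
  shows "subtree_at d (w @ [c]) \<subseteq> A"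
proof -
  have "card (subtree_at d (w @ [c])) \<le> card (subtree_at d (w @ [c']))"
    using assms(1) by (rule card_subtree_at_child_le)
  also have "\<dots> \<le> card (A \<inter> subtree_at d (w @ [c]))"
    using assms(2,3) by (simp add: Int_absorb1)
  finally have "A \<inter> subtree_at d (w @ [c]) = subtree_at d (w @ [c])"
    using card_seteq[OF finite_subtree_at] by blast
  then show ?thesis by blast
qed

lemma OC_Int_TH_verts: "S \<subseteq> S' \<Longrightarrow> OC m S (V \<inter> TH_verts S' m) = OC m S V"
  unfolding OC_def TH_verts_def by auto

lemma OC_eq_Int_OC: "S \<subseteq> S' \<Longrightarrow> OC m S V = S \<inter> OC m S' V"
  unfolding OC_def by auto

lemma OC_subset: "OC m S V \<subseteq> S"
  unfolding OC_def by auto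

lemma largest_seq_OC:
  assumes "largest_seq d m V q w Vs" and "1 \<le> k" and "k \<le> q"
    and "S \<subseteq> subtree_at d (w k)"
  shows "OC m S (Vs k) = OC m S V"
  using assms(2-4)
proof (induction k arbitrary: S rule: nat_induct_at_least)
  case base
  then show ?case using assms(1) unfolding largest_seq_def by simp
next
  case (Suc k)
  from assms(1) Suc.hyps Suc.prems(1) obtain c where
    "w (Suc k) = w k @ [c]"
    "Vs (Suc k) = Vs k \<inter> TH_verts (subtree_at d (w (Suc k))) m"
    unfolding largest_seq_def by auto
  with Suc.prems Suc.IH show ?case
    using subtree_at_append_subset[of d "w k" "[c]"] by (simp add: OC_Int_TH_verts)
qed

lemma minimal_lacking_length_ge_2:
  assumes "minimal_lacking d m V q w Vs p" and "p > 0"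
  shows "q \<ge> 2"
proof (rule ccontr)
  assume "\<not> q \<ge> 2"
  with assms(1) have "q = 1" unfolding minimal_lacking_def largest_seq_def by auto
  with assms show False unfolding minimal_lacking_def by auto
qed

lemma largest_seq_last_subtree_occupied:
  assumes seq: "largest_seq d m V q w Vs" and i: "q = Suc i" "1 \<le> i"
    and outside: "tern_tree d - subtree_at d (w q) \<subseteq> OC m (tern_tree d) V"
  shows "subtree_at d (w q) \<subseteq> OC m (tern_tree d) V"
proof -
  let ?Ti = "subtree_at d (w i)" and ?occ = "OC m (tern_tree d) V"
  from seq i obtain c where c: "w q = w i @ [c]" and
    largest: "\<forall>c'\<in>{0,1,2}. card (OC m ?Ti (Vs i) \<inter> subtree_at d (w i @ [c']))
                           \<le> card (OC m ?Ti (Vs i) \<inter> subtree_at d (w q))"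
    unfolding largest_seq_def by auto
  have "OC m ?Ti (Vs i) = OC m ?Ti V"
    using largest_seq_OC[OF seq i(2)] i(1) by simp
  also have "\<dots> = ?Ti \<inter> ?occ"
    by (rule OC_eq_Int_OC[OF subtree_at_subset_tern_tree])
  finally have occ_Ti: "OC m ?Ti (Vs i) = ?Ti \<inter> ?occ" .
  define c' :: nat where "c' = (if c = 0 then 1 else 0)"
  have c': "c' \<in> {0,1,2}" "c' \<noteq> c" unfolding c'_def by auto
  have "subtree_at d (w i @ [c']) \<subseteq> tern_tree d - subtree_at d (w q)"
    using subtree_at_siblings_disjoint[OF c'(2), of d "w i"] c
      subtree_at_subset_tern_tree[of d "w i @ [c']"] by auto
  then have "subtree_at d (w i @ [c']) \<subseteq> OC m ?Ti (Vs i)"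
    using outside subtree_at_append_subset[of d "w i" "[c']"] occ_Ti by blast
  then have "subtree_at d (w q) \<subseteq> OC m ?Ti (Vs i)"
    using subtree_at_subset_if_sibling_subset[OF c'(1)] largest c' c by metis
  with occ_Ti show ?thesis by blast
qed

theorem lemma6:
  fixes p d m q :: nat and EH :: "nat \<Rightarrow> nat \<Rightarrow> bool"
    and V :: "(nat list \<times> nat) set"
    and w :: "nat \<Rightarrow> nat list" and Vs :: "nat \<Rightarrow> (nat list \<times> nat) set"
  assumes "p > 0"
    and "\<And>a b. EH a b \<Longrightarrow> a \<in> {1..m} \<and> b \<in> {1..m} \<and> a \<noteq> b \<and> EH b a"
    and "V \<subseteq> TH_verts (tern_tree d) m"
    and "OC m (tern_tree d) V \<subset> tern_tree d"
    and "minimal_lacking d m V q w Vs p"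
  shows "OC m (tern_tree d - subtree_at d (w q))
            (V \<inter> TH_verts (tern_tree d - subtree_at d (w q)) m)
          \<subset> tern_tree d - subtree_at d (w q)"
proof -
  let ?T = "tern_tree d" and ?Tq = "subtree_at d (w q)" and ?occ = "OC m (tern_tree d) V"
  have seq: "largest_seq d m V q w Vs"
    using assms(5) unfolding minimal_lacking_def by simp
  define i where "i = q - 1"
  have i: "q = Suc i" "1 \<le> i"
    using minimal_lacking_length_ge_2[OF assms(5,1)] by (simp_all add: i_def)
  show ?thesis
  proof (rule psubsetI)
    show "OC m (?T - ?Tq) (V \<inter> TH_verts (?T - ?Tq) m) \<subseteq> ?T - ?Tq" by (rule OC_subset)
    show "OC m (?T - ?Tq) (V \<inter> TH_verts (?T - ?Tq) m) \<noteq> ?T - ?Tq"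
    proof
      assume "OC m (?T - ?Tq) (V \<inter> TH_verts (?T - ?Tq) m) = ?T - ?Tq"
      then have outside: "?T - ?Tq \<subseteq> ?occ"
        using OC_eq_Int_OC[of "?T - ?Tq" ?T] by (auto simp: OC_Int_TH_verts)
      with largest_seq_last_subtree_occupied[OF seq i] have "?T \<subseteq> ?occ" by blast
      with assms(4) show False by blast
    qed
  qed
qed

end
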